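(* In every state $\mathbf{x}$ of the common-chunk-protocol Markov process (with $k\ge 2$ chunks and any arrival rate $\lambda>0$), the total download rate satisfies \[ r \;\ge\; \frac{S\, r_0^2}{6k^2}, \qquad\text{where } r_0=\sum_{i=1}^k dS_i^+ . \]
   Context: Model: Fix an integer $k\ge 2$ (number of chunks of a file) and $\lambda>0$. There is always exactly one seed holding all $k$ chunks. Non-seed peers arrive according to a Poisson process of rate $\lambda$, each arriving with no chunks; each non-seed peer holds a subset (its profile) of $\{1,\dots,k\}$ and leaves the system immediately once it holds all $k$ chunks. The state $\mathbf{x}$ of the continuous-time Markov process is the number of non-seed peers with each profile. $S$ denotes the total number of peers present, including the seed. Each non-seed peer has an independent rate-1 Poisson clock; at each tick it draws a sample of peers independently and uniformly at random with replacement from the current $S$ peers (seed and itself included) and may instantaneously download at most one chunk that it lacks and that is held by some sampled peer (such a chunk is a "match"). Counting draws with multiplicity, a chunk is "rare" in a sample of 3 draws if exactly one of the 3 draws holds it. Common chunk protocol: (i) a peer with no chunks draws 3 peers and downloads a chunk chosen uniformly among the rare matches, if there is any, otherwise nothing; (ii) a peer holding at least 1 and at most $k-2$ chunks draws 1 peer and downloads a uniformly chosen match, if any, otherwise nothing; (iii) a peer holding exactly $k-1$ chunks draws 3 peers and downloads its missing chunk only if that chunk is held by some draw and every chunk it holds is held by at least 2 of the 3 draws; otherwise nothing. Notation: $S_i$ ($1\le i\le k$) is the number of peers, including the seed, holding chunk $i$; $S_0$ is the number of peers holding no chunks; $\bar S_i=S-S_i$; $\bar T_i$ is the number of peers whose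 profile is exactly $\{1,\dots,k\}\setminus\{i\}$. $r=r(\mathbf{x})$ is the total rate of download events in state $\mathbf{x}$, i.e. the sum over all non-seed peers of the probability that a clock tick of that peer results in a download. $dS_i^+=dS_i^+(\mathbf{x})$ is the probability that a clock tick of a peer holding no chunks results in that peer downloading chunk $i$. *)

theory Defs
  imports Complex_Main
begin

text \<open>Chunks are 1..k. A state x assigns to each
profile the number of non-seed peers with that profile (only proper subsets of {1..k}
may occur, since peers leave once complete). The seed holds all of {1..k}.\<close>

definition profiles :: "nat \<Rightarrow> nat set set" where
  "profiles k = Pow {1..k}"

definition nonseed_profiles :: "nat \<Rightarrow> nat set set" where
  "nonseed_profiles k = Pow {1..k} - {{1..k}}"

text \<open>S: total number of peers, including the seed.\<close>
definition num_peers :: "nat \<Rightarrow> (nat set \<Rightarrow> nat) \<Rightarrow> nat" where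
  "num_peers k x = 1 + (\<Sum>P\<in>nonseed_profiles k. x P)"

text \<open>Probability that one uniform draw (from all S peers, seed and the drawing
peer included) has profile A.\<close>
definition draw_prob :: "nat \<Rightarrow> (nat set \<Rightarrow> nat) \<Rightarrow> nat set \<Rightarrow> real" where
  "draw_prob k x A =
     (real (x A) + (if A = {1..k} then 1 else 0)) / real (num_peers k x)"

definition hold_count :: "nat set list \<Rightarrow> nat \<Rightarrow> nat" where
  "hold_count As i = length (filter (\<lambda>A. i \<in> A) As)"

definition rare :: "nat \<Rightarrow> nat set list \<Rightarrow> nat set" where
  "rare k As = {i \<in> {1..k}. hold_count As i = 1}"

definition exp3 :: "nat \<Rightarrow> (nat set \<Rightarrow> nat) \<Rightarrow> (nat set list \<Rightarrow> real) \<Rightarrow> real" where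
  "exp3 k x f = (\<Sum>A1\<in>profiles k. \<Sum>A2\<in>profiles k. \<Sum>A3\<in>profiles k.
       draw_prob k x A1 * draw_prob k x A2 * draw_prob k x A3 * f [A1, A2, A3])"

text \<open>dS_i^+: probability that a tick of a peer holding no chunks results in that
peer downloading chunk i (uniform choice among rare matches).\<close>
definition dS_plus :: "nat \<Rightarrow> (nat set \<Rightarrow> nat) \<Rightarrow> nat \<Rightarrow> real" where
  "dS_plus k x i = exp3 k x (\<lambda>As.
      if i \<in> rare k As then 1 / real (card (rare k As)) else 0)"

text \<open>Probability that a clock tick of a peer with profile P results in a download,
under the common chunk protocol.\<close>
definition download_prob :: "nat \<Rightarrow> (nat set \<Rightarrow> nat) \<Rightarrow> nat set \<Rightarrow> real" where
  "download_prob k x P =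
    (if P = {} then
       exp3 k x (\<lambda>As. if rare k As \<noteq> {} then 1 else 0)
     else if card P \<le> k - 2 then
       (\<Sum>A\<in>profiles k. draw_prob k x A * (if A - P \<noteq> {} then 1 else 0))
     else if card P = k - 1 then
       exp3 k x (\<lambda>As.
         if (\<forall>m\<in>{1..k} - P. hold_count As m \<ge> 1) \<and> (\<forall>i\<in>P. hold_count As i \<ge> 2)
         then 1 else 0)
     else 0)"

definition total_rate :: "nat \<Rightarrow> (nat set \<Rightarrow> nat) \<Rightarrow> real" where
  "total_rate k x = (\<Sum>P\<in>nonseed_profiles k. real (x P) * download_prob k x P)"

end

theory Submission
  imports Defs "HOL-Analysis.Convex"
begin

(* Write p(A) for the probability that one uniform draw has profile A, d(A) for the download
   probability of a tick of a peer with profile A, a_i (b_i) for the probability that a draw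
   holds (misses) chunk i, t_i = p({1..k} - {i}) and z = p({}).  Then r = S * sum_A p(A) d(A).
   The proof has three ingredients:
   (1) r0 is the probability that three draws contain a rare chunk, so by the union bound
       r0 <= sum_i 3 a_i b_i^2;
   (2) b_i splits as z + t_i + m_i, where m_i is the mass of the "middle" profiles
       (nonempty, at most k-2 chunks) missing i; a middle peer missing i downloads at least
       with probability a_i, and the peer with profile {1..k} - {i} with probability a_i t_i^2;
   (3) with LM, LT the rate contributions of the middle and of the (k-1)-chunk profiles,
       these give r0 <= 6k z + 6k LM + 3 W with W = sum_i a_i t_i^2 and W^2 <= k LT
       (Cauchy-Schwarz), while r/S >= z r0 + LM + LT; elementary algebra concludes. *)

section \<open>Single draws\<close>

lemma finite_profiles: "finite (profiles k)"
  unfolding profiles_def by simp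

lemma num_peers_pos: "num_peers k x > 0"
  unfolding num_peers_def by simp

lemma draw_prob_nonneg: "draw_prob k x A \<ge> 0"
  unfolding draw_prob_def by simp

lemma draw_prob_sum:
  assumes state: "\<forall>P. x P \<noteq> 0 \<longrightarrow> P \<in> nonseed_profiles k"
  shows "(\<Sum>A\<in>profiles k. draw_prob k x A) = 1"
proof -
  have full: "{1..k} \<in> profiles k" unfolding profiles_def by simp
  have no_complete_peer: "x {1..k} = 0" using state unfolding nonseed_profiles_def by auto
  have nonseed: "nonseed_profiles k = profiles k - {{1..k}}"
    unfolding nonseed_profiles_def profiles_def by simp
  have "(\<Sum>A\<in>profiles k. real (x A) + (if A = {1..k} then 1 else 0))
        = (\<Sum>A\<in>profiles k. real (x A)) + 1"
    using full finite_profiles by (simp add: sum.distrib)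
  also have "(\<Sum>A\<in>profiles k. real (x A)) = (\<Sum>A\<in>nonseed_profiles k. real (x A))"
    unfolding nonseed using full finite_profiles no_complete_peer by (simp add: sum_diff1)
  finally have "(\<Sum>A\<in>profiles k. real (x A) + (if A = {1..k} then 1 else 0))
      = real (num_peers k x)"
    unfolding num_peers_def by simp
  then show ?thesis
    unfolding draw_prob_def using num_peers_pos[of k x]
    by (simp add: sum_divide_distrib[symmetric])
qed

lemma draw_prob_le_1:
  assumes "\<forall>P. x P \<noteq> 0 \<longrightarrow> P \<in> nonseed_profiles k" and "A \<in> profiles k"
  shows "draw_prob k x A \<le> 1"
  using member_le_sum[of A "profiles k" "draw_prob k x"] finite_profiles draw_prob_nonneg
    draw_prob_sum[OF assms(1)] assms(2) by fastforce

definition hold_prob :: "nat \<Rightarrow> (nat set \<Rightarrow> nat) \<Rightarrow> nat \<Rightarrow> real" where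
  "hold_prob k x i = (\<Sum>A\<in>{A\<in>profiles k. i \<in> A}. draw_prob k x A)"

definition miss_prob :: "nat \<Rightarrow> (nat set \<Rightarrow> nat) \<Rightarrow> nat \<Rightarrow> real" where
  "miss_prob k x i = (\<Sum>A\<in>{A\<in>profiles k. i \<notin> A}. draw_prob k x A)"

lemma hold_prob_indicator:
  "(\<Sum>A\<in>profiles k. draw_prob k x A * (if i \<in> A then 1 else 0)) = hold_prob k x i"
  unfolding hold_prob_def sum.inter_filter[OF finite_profiles] by (intro sum.cong) auto

lemma miss_prob_indicator:
  "(\<Sum>A\<in>profiles k. draw_prob k x A * (if i \<notin> A then 1 else 0)) = miss_prob k x i"
  unfolding miss_prob_def sum.inter_filter[OF finite_profiles] by (intro sum.cong) auto

lemma hold_miss_prob: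
  assumes "\<forall>P. x P \<noteq> 0 \<longrightarrow> P \<in> nonseed_profiles k"
  shows "hold_prob k x i + miss_prob k x i = 1"
    and "0 \<le> hold_prob k x i" and "hold_prob k x i \<le> 1"
    and "0 \<le> miss_prob k x i" and "miss_prob k x i \<le> 1"
proof -
  have "hold_prob k x i + miss_prob k x i = (\<Sum>A\<in>profiles k. draw_prob k x A)"
    unfolding hold_prob_indicator[symmetric] miss_prob_indicator[symmetric] sum.distrib[symmetric]
    by (intro sum.cong) auto
  then show sum1: "hold_prob k x i + miss_prob k x i = 1"
    using draw_prob_sum[OF assms] by simp
  show hold0: "0 \<le> hold_prob k x i" and miss0: "0 \<le> miss_prob k x i"
    unfolding hold_prob_def miss_prob_def by (simp_all add: sum_nonneg draw_prob_nonneg)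
  show "hold_prob k x i \<le> 1" and "miss_prob k x i \<le> 1"
    using sum1 hold0 miss0 by linarith+
qed

section \<open>Expectations over three independent draws\<close>

lemma exp3_cong:
  assumes "\<And>A1 A2 A3. f [A1, A2, A3] = g [A1, A2, A3]"
  shows "exp3 k x f = exp3 k x g"
  unfolding exp3_def using assms by simp

lemma exp3_mono:
  assumes "\<And>A1 A2 A3. f [A1, A2, A3] \<le> g [A1, A2, A3]"
  shows "exp3 k x f \<le> exp3 k x g"
  unfolding exp3_def
  by (intro sum_mono mult_left_mono assms) (auto intro: mult_nonneg_nonneg draw_prob_nonneg)

lemma exp3_nonneg:
  assumes "\<And>A1 A2 A3. f [A1, A2, A3] \<ge> 0"
  shows "exp3 k x f \<ge> 0"
  using exp3_mono[of "\<lambda>_. 0" f k x] assms by (simp add: exp3_def)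

lemma exp3_add: "exp3 k x (\<lambda>As. f As + g As) = exp3 k x f + exp3 k x g"
  unfolding exp3_def by (simp add: distrib_left sum.distrib)

lemma exp3_sum: "exp3 k x (\<lambda>As. \<Sum>i\<in>I. f i As) = (\<Sum>i\<in>I. exp3 k x (f i))"
proof (cases "finite I")
  case True
  then show ?thesis
    by (induction I rule: finite_induct) (simp_all add: exp3_add, simp add: exp3_def)
qed (simp add: exp3_def)

lemma exp3_product:
  "exp3 k x (\<lambda>As. f (As!0) * g (As!1) * h (As!2)) =
     (\<Sum>A\<in>profiles k. draw_prob k x A * f A) * (\<Sum>A\<in>profiles k. draw_prob k x A * g A)
       * (\<Sum>A\<in>profiles k. draw_prob k x A * h A)"
proof -
  let ?p = "draw_prob k x"
  have "exp3 k x (\<lambda>As. f (As!0) * g (As!1) * h (As!2)) =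
      (\<Sum>A1\<in>profiles k. \<Sum>A2\<in>profiles k. \<Sum>A3\<in>profiles k.
         (?p A1 * f A1) * ((?p A2 * g A2) * (?p A3 * h A3)))"
    unfolding exp3_def by (intro sum.cong refl) (simp add: mult_ac)
  also have "\<dots> = (\<Sum>A1\<in>profiles k. (?p A1 * f A1) *
      (\<Sum>A2\<in>profiles k. \<Sum>A3\<in>profiles k. (?p A2 * g A2) * (?p A3 * h A3)))"
    by (simp add: sum_distrib_left)
  also have "\<dots> = (\<Sum>A1\<in>profiles k. (?p A1 * f A1) *
      ((\<Sum>A2\<in>profiles k. ?p A2 * g A2) * (\<Sum>A3\<in>profiles k. ?p A3 * h A3)))"
    by (simp only: sum_product)
  finally show ?thesis
    by (simp only: sum_distrib_right mult.assoc)
qed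

lemma exp3_one:
  assumes "\<forall>P. x P \<noteq> 0 \<longrightarrow> P \<in> nonseed_profiles k"
  shows "exp3 k x (\<lambda>_. 1) = 1"
  using exp3_product[of k x "\<lambda>_. 1" "\<lambda>_. 1" "\<lambda>_. 1"] draw_prob_sum[OF assms] by simp

lemma hold_count_three:
  "hold_count [A1, A2, A3] i =
     (if i \<in> A1 then 1 else 0) + (if i \<in> A2 then 1 else 0) + (if i \<in> A3 then 1 else 0)"
  unfolding hold_count_def by simp

lemma exactly_one_holder_prob:
  "exp3 k x (\<lambda>As. if hold_count As i = 1 then 1 else 0) = 3 * hold_prob k x i * miss_prob k x i ^ 2"
proof -
  define h where "h A = (if i \<in> A then 1 else 0 :: real)" for A
  define n where "n A = (if i \<notin> A then 1 else 0 :: real)" for A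
  have "exp3 k x (\<lambda>As. if hold_count As i = 1 then 1 else 0) =
      exp3 k x (\<lambda>As. (h (As!0) * n (As!1) * n (As!2) + n (As!0) * h (As!1) * n (As!2))
                     + n (As!0) * n (As!1) * h (As!2))"
    by (rule exp3_cong) (simp add: hold_count_three h_def n_def)
  also have "\<dots> = 3 * hold_prob k x i * miss_prob k x i ^ 2"
    unfolding exp3_add exp3_product
    unfolding h_def n_def hold_prob_indicator miss_prob_indicator
    by (simp add: power2_eq_square)
  finally show ?thesis .
qed

section \<open>The rare-chunk probability r0\<close>

definition rare_prob :: "nat \<Rightarrow> (nat set \<Rightarrow> nat) \<Rightarrow> real" where
  "rare_prob k x = exp3 k x (\<lambda>As. if rare k As \<noteq> {} then 1 else 0)"

lemma sum_dS_plus: "(\<Sum>i=1..k. dS_plus k x i) = rare_prob k x"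
proof -
  have "(\<Sum>i=1..k. dS_plus k x i) = exp3 k x (\<lambda>As.
      \<Sum>i=1..k. if i \<in> rare k As then 1 / real (card (rare k As)) else 0)"
    unfolding dS_plus_def by (rule exp3_sum[symmetric])
  also have "\<dots> = rare_prob k x" unfolding rare_prob_def
  proof (rule exp3_cong)
    fix A1 A2 A3
    let ?R = "rare k [A1, A2, A3]"
    have sub: "?R \<subseteq> {1..k}" unfolding rare_def by auto
    then have "(\<Sum>i=1..k. if i \<in> ?R then 1 / real (card ?R) else 0) = (\<Sum>i\<in>?R. 1 / real (card ?R))"
      by (simp add: sum.If_cases Int_absorb1 Int_commute)
    also have "\<dots> = (if ?R \<noteq> {} then 1 else 0)"
      using finite_subset[OF sub] by auto
    finally show "(\<Sum>i=1..k. if i \<in> ?R then 1 / real (card ?R) else 0) = (if ?R \<noteq> {} then 1 else 0)" .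
  qed
  finally show ?thesis .
qed

lemma rare_prob_bounds:
  assumes "\<forall>P. x P \<noteq> 0 \<longrightarrow> P \<in> nonseed_profiles k"
  shows "0 \<le> rare_prob k x" and "rare_prob k x \<le> 1"
proof -
  show "0 \<le> rare_prob k x" unfolding rare_prob_def by (rule exp3_nonneg) simp
  have "rare_prob k x \<le> exp3 k x (\<lambda>_. 1)" unfolding rare_prob_def by (rule exp3_mono) simp
  then show "rare_prob k x \<le> 1" using exp3_one[OF assms] by simp
qed

text \<open>Union bound over the chunks.\<close>

lemma rare_prob_union_bound:
  "rare_prob k x \<le> (\<Sum>i=1..k. 3 * hold_prob k x i * miss_prob k x i ^ 2)"
proof -
  have "rare_prob k x \<le> exp3 k x (\<lambda>As. \<Sum>i=1..k. if hold_count As i = 1 then 1 else 0)"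
    unfolding rare_prob_def
  proof (rule exp3_mono)
    fix A1 A2 A3
    let ?c = "\<lambda>i. if hold_count [A1, A2, A3] i = 1 then 1 else 0 :: real"
    show "(if rare k [A1, A2, A3] \<noteq> {} then 1 else 0) \<le> (\<Sum>i=1..k. ?c i)"
    proof (cases "rare k [A1, A2, A3] = {}")
      case False
      then obtain j where "j \<in> {1..k}" "hold_count [A1, A2, A3] j = 1"
        unfolding rare_def by auto
      then have "1 \<le> (\<Sum>i=1..k. ?c i)"
        using member_le_sum[of j "{1..k}" ?c] by simp
      then show ?thesis using False by simp
    qed (simp add: sum_nonneg)
  qed
  also have "\<dots> = (\<Sum>i=1..k. 3 * hold_prob k x i * miss_prob k x i ^ 2)"
    unfolding exp3_sum exactly_one_holder_prob ..
  finally show ?thesis .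
qed

section \<open>Download probabilities of individual profiles\<close>

lemma download_prob_nonneg: "download_prob k x P \<ge> 0"
  unfolding download_prob_def
  by (auto intro!: exp3_nonneg sum_nonneg mult_nonneg_nonneg draw_prob_nonneg split: if_splits)

lemma download_prob_empty: "download_prob k x {} = rare_prob k x"
  unfolding download_prob_def rare_prob_def by simp

text \<open>A peer with at least one and at most k-2 chunks, missing chunk i, downloads whenever
  its single draw holds chunk i.\<close>

lemma download_prob_middle:
  assumes "i \<notin> A" and "A \<noteq> {}" and "card A \<le> k - 2"
  shows "download_prob k x A \<ge> hold_prob k x i"
proof -
  have "download_prob k x A = (\<Sum>B\<in>profiles k. draw_prob k x B * (if B - A \<noteq> {} then 1 else 0))"
    unfolding download_prob_def using assms by simp
  also have "\<dots> \<ge> hold_prob k x i"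
    unfolding hold_prob_indicator[symmetric]
    by (intro sum_mono mult_left_mono) (use assms(1) in \<open>auto simp: draw_prob_nonneg\<close>)
  finally show ?thesis .
qed

definition almost_full :: "nat \<Rightarrow> nat \<Rightarrow> nat set" where
  "almost_full k i = {1..k} - {i}"

lemma almost_full_profile: "almost_full k i \<in> profiles k"
  unfolding almost_full_def profiles_def by auto

lemma card_almost_full: "i \<in> {1..k} \<Longrightarrow> card (almost_full k i) = k - 1"
  unfolding almost_full_def by simp

text \<open>A peer missing only chunk i downloads at least when the first draw holds i and the
  other two draws have its own profile.\<close>

lemma download_prob_almost_full:
  assumes "k \<ge> 2" and i: "i \<in> {1..k}"
  shows "download_prob k x (almost_full k i) \<ge> hold_prob k x i * draw_prob k x (almost_full k i) ^ 2"
proof -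
  let ?T = "almost_full k i"
  let ?good = "\<lambda>As. (\<forall>m\<in>{1..k} - ?T. hold_count As m \<ge> 1) \<and> (\<forall>j\<in>?T. hold_count As j \<ge> 2)"
  define h where "h A = (if i \<in> A then 1 else 0 :: real)" for A
  define e where "e A = (if A = ?T then 1 else 0 :: real)" for A
  have "?T \<noteq> {}" and "\<not> card ?T \<le> k - 2"
    using card_almost_full[OF i] assms(1) by auto
  then have "download_prob k x ?T = exp3 k x (\<lambda>As. if ?good As then 1 else 0)"
    unfolding download_prob_def using card_almost_full[OF i] by simp
  also have "\<dots> \<ge> exp3 k x (\<lambda>As. h (As!0) * e (As!1) * e (As!2))"
  proof (rule exp3_mono)
    fix A1 A2 A3
    have "?good [A1, A2, A3]" if "i \<in> A1" "A2 = ?T" "A3 = ?T"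
      using that i by (auto simp: hold_count_three almost_full_def)
    then show "h ([A1, A2, A3]!0) * e ([A1, A2, A3]!1) * e ([A1, A2, A3]!2)
        \<le> (if ?good [A1, A2, A3] then 1 else 0)"
      by (auto simp: h_def e_def)
  qed
  also have "exp3 k x (\<lambda>As. h (As!0) * e (As!1) * e (As!2))
      = hold_prob k x i * draw_prob k x ?T ^ 2"
    unfolding exp3_product
    unfolding h_def e_def hold_prob_indicator
    using almost_full_profile[of k i] finite_profiles[of k]
    by (simp add: if_distrib power2_eq_square cong: if_cong)
  finally show ?thesis .
qed

text \<open>Contribution of a family of profiles to the normalized rate r/S.\<close>

definition partial_rate :: "nat \<Rightarrow> (nat set \<Rightarrow> nat) \<Rightarrow> nat set set \<Rightarrow> real" where
  "partial_rate k x \<A> = (\<Sum>A\<in>\<A>. draw_prob k x A * download_prob k x A)"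

lemma partial_rate_nonneg: "partial_rate k x \<A> \<ge> 0"
  unfolding partial_rate_def by (simp add: sum_nonneg draw_prob_nonneg download_prob_nonneg)

lemma partial_rate_mono:
  "\<B> \<subseteq> \<A> \<Longrightarrow> finite \<A> \<Longrightarrow> partial_rate k x \<B> \<le> partial_rate k x \<A>"
  unfolding partial_rate_def
  by (rule sum_mono2) (simp_all add: draw_prob_nonneg download_prob_nonneg)

lemma total_rate_eq: "total_rate k x = real (num_peers k x) * partial_rate k x (nonseed_profiles k)"
  unfolding total_rate_def partial_rate_def sum_distrib_left
proof (intro sum.cong refl)
  fix A assume "A \<in> nonseed_profiles k"
  then have "A \<noteq> {1..k}" unfolding nonseed_profiles_def by auto
  then show "real (x A) * download_prob k x A =
      real (num_peers k x) * (draw_prob k x A * download_prob k x A)"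
    unfolding draw_prob_def using num_peers_pos[of k x] by simp
qed

section \<open>Aggregate inequalities\<close>

text \<open>Non-seed profiles other than the empty one and the (k-1)-chunk ones.\<close>

definition middle_profiles :: "nat \<Rightarrow> nat set set" where
  "middle_profiles k = {A\<in>profiles k. A \<noteq> {} \<and> card A \<le> k - 2}"

definition top_profiles :: "nat \<Rightarrow> nat set set" where
  "top_profiles k = almost_full k ` {1..k}"

definition middle_miss_prob :: "nat \<Rightarrow> (nat set \<Rightarrow> nat) \<Rightarrow> nat \<Rightarrow> real" where
  "middle_miss_prob k x i = (\<Sum>A\<in>{A\<in>middle_profiles k. i \<notin> A}. draw_prob k x A)"

definition tail_weight :: "nat \<Rightarrow> (nat set \<Rightarrow> nat) \<Rightarrow> real" where
  "tail_weight k x = (\<Sum>i=1..k. hold_prob k x i * draw_prob k x (almost_full k i) ^ 2)"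

text \<open>A profile missing chunk i is empty, the almost full profile missing i, or a middle
  profile (a proper subset of the latter has at most k-2 chunks).\<close>

lemma profile_missing_cases:
  assumes "i \<in> {1..k}" and "A \<in> profiles k" and "i \<notin> A" and "A \<noteq> {}"
    and "A \<noteq> almost_full k i"
  shows "A \<in> middle_profiles k"
proof -
  have "A \<subset> almost_full k i"
    using assms unfolding profiles_def almost_full_def by auto
  then have "card A < card (almost_full k i)"
    by (simp add: psubset_card_mono almost_full_def)
  moreover have "card (almost_full k i) = k - 1"
    using assms(1) by (rule card_almost_full)
  ultimately show ?thesis
    using assms unfolding middle_profiles_def by auto
qed

lemma almost_full_not_middle:
  "k \<ge> 2 \<Longrightarrow> i \<in> {1..k} \<Longrightarrow> almost_full k i \<notin> middle_profiles k"
  using card_almost_full[of i k] unfolding middle_profiles_def by auto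

lemma almost_full_nonempty: "k \<ge> 2 \<Longrightarrow> i \<in> {1..k} \<Longrightarrow> almost_full k i \<noteq> {}"
  using card_almost_full[of i k] by auto

lemma miss_prob_split:
  assumes k: "k \<ge> 2" and i: "i \<in> {1..k}"
  shows "miss_prob k x i =
    draw_prob k x {} + draw_prob k x (almost_full k i) + middle_miss_prob k x i"
proof -
  let ?M = "{A\<in>middle_profiles k. i \<notin> A}"
  have "{A\<in>profiles k. i \<notin> A} = insert {} (insert (almost_full k i) ?M)"
    using profile_missing_cases[OF i] almost_full_profile[of k i]
    by (auto simp: profiles_def middle_profiles_def almost_full_def)
  moreover have "finite ?M" using finite_profiles[of k] by (simp add: middle_profiles_def)
  moreover have "{} \<notin> insert (almost_full k i) ?M" and "almost_full k i \<notin> ?M"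
    using almost_full_nonempty[OF k i] almost_full_not_middle[OF k i]
    by (auto simp: middle_profiles_def)
  ultimately show ?thesis
    unfolding miss_prob_def middle_miss_prob_def by simp
qed

text \<open>Every middle profile missing i downloads with probability at least a_i.\<close>

lemma hold_times_middle_miss_le:
  "hold_prob k x i * middle_miss_prob k x i \<le> partial_rate k x (middle_profiles k)"
proof -
  let ?M = "{A\<in>middle_profiles k. i \<notin> A}"
  have fin: "finite (middle_profiles k)"
    using finite_profiles[of k] by (simp add: middle_profiles_def)
  have "hold_prob k x i * middle_miss_prob k x i = (\<Sum>A\<in>?M. draw_prob k x A * hold_prob k x i)"
    unfolding middle_miss_prob_def by (simp add: sum_distrib_left mult.commute)
  also have "\<dots> \<le> partial_rate k x ?M"
    unfolding partial_rate_def
    by (intro sum_mono mult_left_mono download_prob_middle draw_prob_nonneg)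
      (auto simp: middle_profiles_def)
  also have "\<dots> \<le> partial_rate k x (middle_profiles k)"
    using fin by (intro partial_rate_mono) auto
  finally show ?thesis .
qed

text \<open>The union bound combined with b_i^2 <= 2 (z + m_i) + t_i^2 (valid as b_i <= 1).\<close>

lemma rare_prob_le_split:
  assumes state: "\<forall>P. x P \<noteq> 0 \<longrightarrow> P \<in> nonseed_profiles k" and k: "k \<ge> 2"
  shows "rare_prob k x \<le> 6 * real k * draw_prob k x {}
    + 6 * real k * partial_rate k x (middle_profiles k) + 3 * tail_weight k x"
proof -
  let ?a = "hold_prob k x" and ?b = "miss_prob k x" and ?z = "draw_prob k x {}"
  let ?t = "\<lambda>i. draw_prob k x (almost_full k i)" and ?m = "middle_miss_prob k x"
  let ?LM = "partial_rate k x (middle_profiles k)"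
  have per_chunk: "3 * ?a i * ?b i ^ 2 \<le> 6 * (?a i * ?z) + 6 * (?a i * ?m i) + 3 * (?a i * ?t i ^ 2)"
    if i: "i \<in> {1..k}" for i
  proof -
    have split: "?b i = ?z + ?t i + ?m i" by (rule miss_prob_split[OF k i])
    have "?b i + ?t i \<le> 2"
      using hold_miss_prob(5)[OF state, of i] draw_prob_le_1[OF state almost_full_profile[of k i]] by simp
    moreover have "0 \<le> ?z + ?m i"
      unfolding middle_miss_prob_def by (simp add: sum_nonneg draw_prob_nonneg)
    ultimately have "(?z + ?m i) * (?b i + ?t i) \<le> (?z + ?m i) * 2"
      by (rule mult_left_mono)
    moreover have "?b i ^ 2 = (?z + ?m i) * (?b i + ?t i) + ?t i ^ 2"
      unfolding split by (simp add: power2_eq_square algebra_simps)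
    ultimately have "?b i ^ 2 \<le> 2 * (?z + ?m i) + ?t i ^ 2" by simp
    then have "?a i * ?b i ^ 2 \<le> ?a i * (2 * (?z + ?m i) + ?t i ^ 2)"
      using hold_miss_prob(2)[OF state] by (rule mult_left_mono)
    then show ?thesis by (simp add: algebra_simps)
  qed
  have "rare_prob k x \<le> (\<Sum>i=1..k. 3 * ?a i * ?b i ^ 2)"
    by (rule rare_prob_union_bound)
  also have "\<dots> \<le> (\<Sum>i=1..k. 6 * (?a i * ?z) + 6 * (?a i * ?m i) + 3 * (?a i * ?t i ^ 2))"
    by (rule sum_mono) (rule per_chunk)
  also have "\<dots> = 6 * (\<Sum>i=1..k. ?a i * ?z) + 6 * (\<Sum>i=1..k. ?a i * ?m i) + 3 * tail_weight k x"
    unfolding tail_weight_def by (simp add: sum.distrib sum_distrib_left)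
  also have "(\<Sum>i=1..k. ?a i * ?z) \<le> (\<Sum>i=1..k. ?z)"
    by (intro sum_mono mult_left_le_one_le draw_prob_nonneg hold_miss_prob(2,3)[OF state])
  also have "(\<Sum>i=1..k. ?a i * ?m i) \<le> (\<Sum>i=1..k. ?LM)"
    by (intro sum_mono hold_times_middle_miss_le)
  finally show ?thesis by (simp add: mult.assoc)
qed

text \<open>Cauchy-Schwarz together with a_i t_i^2 <= d(T_i) gives W^2 <= k LT.\<close>

lemma tail_weight_sq_le:
  assumes state: "\<forall>P. x P \<noteq> 0 \<longrightarrow> P \<in> nonseed_profiles k" and k: "k \<ge> 2"
  shows "tail_weight k x ^ 2 \<le> real k * partial_rate k x (top_profiles k)"
proof -
  let ?a = "hold_prob k x" and ?t = "\<lambda>i. draw_prob k x (almost_full k i)"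
  let ?d = "\<lambda>i. download_prob k x (almost_full k i)"
  have inj: "inj_on (almost_full k) {1..k}"
  proof (rule inj_onI)
    fix i j assume "i \<in> {1..k}" "j \<in> {1..k}" "almost_full k i = almost_full k j"
    then show "i = j" unfolding almost_full_def by blast
  qed
  have term_le: "(?a i * ?t i ^ 2) ^ 2 \<le> ?t i * ?d i" if i: "i \<in> {1..k}" for i
  proof -
    have a1: "?a i \<le> 1" and t1: "?t i \<le> 1"
      using hold_miss_prob(3)[OF state] draw_prob_le_1[OF state almost_full_profile[of k i]] .
    have a0: "0 \<le> ?a i" and t0: "0 \<le> ?t i"
      using hold_miss_prob(2)[OF state] draw_prob_nonneg .
    have "(?a i * ?t i ^ 2) ^ 2 = ?t i * (?a i * ?t i ^ 2) * (?a i * ?t i)"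
      by (simp add: power2_eq_square mult_ac)
    also have "\<dots> \<le> ?t i * (?a i * ?t i ^ 2)"
      using mult_le_one[OF a1 t0 t1] a0 t0 by (intro mult_left_le) simp_all
    also have "\<dots> \<le> ?t i * ?d i"
      using download_prob_almost_full[OF k i] t0 by (rule mult_left_mono)
    finally show ?thesis .
  qed
  have "tail_weight k x ^ 2 \<le> (\<Sum>i=1..k. (?a i * ?t i ^ 2) ^ 2) * real k"
    unfolding tail_weight_def
    using sum_squared_le_sum_of_squares[of "\<lambda>i. ?a i * ?t i ^ 2" "{1..k}"] by simp
  also have "\<dots> \<le> (\<Sum>i=1..k. ?t i * ?d i) * real k"
    using term_le by (intro mult_right_mono sum_mono) simp_all
  also have "(\<Sum>i=1..k. ?t i * ?d i) = partial_rate k x (top_profiles k)"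
    unfolding partial_rate_def top_profiles_def sum.reindex[OF inj] by simp
  finally show ?thesis by (simp add: mult.commute)
qed

text \<open>r/S >= z r0 + LM + LT: the empty, middle and top profiles are disjoint non-seed
  families, and the empty profile downloads with probability r0.\<close>

lemma rate_ge_split:
  assumes k: "k \<ge> 2"
  shows "draw_prob k x {} * rare_prob k x + partial_rate k x (middle_profiles k)
    + partial_rate k x (top_profiles k) \<le> partial_rate k x (nonseed_profiles k)"
proof -
  let ?E = "{{}}" and ?M = "middle_profiles k" and ?T = "top_profiles k"
  have fin_mid: "finite ?M"
    using finite_profiles[of k] by (simp add: middle_profiles_def)
  have fin_top: "finite ?T" by (simp add: top_profiles_def)
  have top_card: "card A = k - 1" if "A \<in> ?T" for A
    using that card_almost_full by (auto simp: top_profiles_def)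
  have disj1: "?E \<inter> ?M = {}" by (auto simp: middle_profiles_def)
  have "A \<notin> ?E \<union> ?M" if "A \<in> ?T" for A
    using top_card[OF that] k by (auto simp: middle_profiles_def)
  then have disj2: "(?E \<union> ?M) \<inter> ?T = {}" by blast
  have sub: "?E \<union> ?M \<union> ?T \<subseteq> nonseed_profiles k"
  proof
    fix A assume A: "A \<in> ?E \<union> ?M \<union> ?T"
    then consider "A = {}" | "A \<in> ?M" | "A \<in> ?T" by blast
    then have "card A \<noteq> k"
    proof cases
      case 2
      then have "card A \<le> k - 2" by (simp add: middle_profiles_def)
      then show ?thesis using k by linarith
    next
      case 3 then show ?thesis using k top_card by simp
    qed (use k in simp)
    then have "A \<noteq> {1..k}" by auto
    moreover have "A \<in> profiles k"
      using A almost_full_profile by (auto simp: middle_profiles_def top_profiles_def profiles_def)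
    ultimately show "A \<in> nonseed_profiles k"
      by (simp add: nonseed_profiles_def profiles_def)
  qed
  have "draw_prob k x {} * rare_prob k x + partial_rate k x ?M + partial_rate k x ?T
      = partial_rate k x (?E \<union> ?M \<union> ?T)"
    unfolding partial_rate_def
    using sum.union_disjoint[OF _ fin_mid disj1, of "\<lambda>A. draw_prob k x A * download_prob k x A"]
      sum.union_disjoint[OF _ fin_top disj2, of "\<lambda>A. draw_prob k x A * download_prob k x A"]
      fin_mid
    by (simp add: download_prob_empty)
  also have "\<dots> \<le> partial_rate k x (nonseed_profiles k)"
    using sub by (rule partial_rate_mono) (simp add: nonseed_profiles_def)
  finally show ?thesis .
qed

text \<open>The closing algebra: from q <= 6k z + 6k LM + 3W, W^2 <= k LT and 0 <= q <= 1,
  q^2 <= 12k (z q + LM + LT) <= 6k^2 (z q + LM + LT).\<close>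

lemma closing_inequality:
  fixes q z LM LT W k :: real
  assumes "k \<ge> 2" "0 \<le> q" "q \<le> 1" "z \<ge> 0" "LM \<ge> 0" "LT \<ge> 0" "W^2 \<le> k * LT"
    and q_le: "q \<le> 6*k*z + 6*k*LM + 3*W"
  shows "q^2 / (6 * k^2) \<le> z*q + LM + LT"
proof -
  have "q^2 \<le> q * (6*k*z + 6*k*LM + 3*W)"
    using assms(2) q_le by (simp add: power2_eq_square mult_left_mono)
  also have "\<dots> = 6*k*(z*q) + 6*k*(q*LM) + 3*q*W" by (simp add: algebra_simps)
  finally have h1: "q^2 \<le> 6*k*(z*q) + 6*k*(q*LM) + 3*q*W" .
  have h2: "6*k*(q*LM) \<le> 6*k*LM"
    using assms by (simp add: mult_left_le_one_le)
  have "0 \<le> (q - 3*W)^2" by simp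
  then have h3: "3*q*W \<le> q^2/2 + 9*W^2/2" by (simp add: power2_eq_square algebra_simps)
  have h4: "9*W^2/2 \<le> 9*k*LT/2" using assms(7) by simp
  have "q^2 \<le> 12*k*(z*q) + 12*k*LM + 9*k*LT" using h1 h2 h3 h4 by linarith
  also have "\<dots> \<le> 12*k*(z*q + LM + LT)"
    using assms by (simp add: algebra_simps)
  also have "\<dots> \<le> 6*k^2*(z*q + LM + LT)"
    using assms by (intro mult_right_mono) (auto simp: power2_eq_square)
  finally show ?thesis using assms(1) by (simp add: divide_le_eq mult.commute)
qed

theorem lemma1:
  fixes k :: nat and x :: "nat set \<Rightarrow> nat" and arrival_rate :: real
  assumes "k \<ge> 2" and "arrival_rate > 0"
    and "\<forall>P. x P \<noteq> 0 \<longrightarrow> P \<in> nonseed_profiles k"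
  shows "total_rate k x \<ge>
           real (num_peers k x) * (\<Sum>i=1..k. dS_plus k x i)^2 / (6 * real k ^ 2)"
proof -
  note k = assms(1) and state = assms(3)
  let ?r0 = "rare_prob k x" and ?z = "draw_prob k x {}"
  let ?LM = "partial_rate k x (middle_profiles k)" and ?LT = "partial_rate k x (top_profiles k)"
  have "?r0^2 / (6 * real k ^ 2) \<le> ?z * ?r0 + ?LM + ?LT"
  proof (rule closing_inequality)
    show "tail_weight k x ^ 2 \<le> real k * ?LT" using tail_weight_sq_le[OF state k] .
    show "?r0 \<le> 6 * real k * ?z + 6 * real k * ?LM + 3 * tail_weight k x"
      using rare_prob_le_split[OF state k] .
  qed (use k rare_prob_bounds[OF state] draw_prob_nonneg partial_rate_nonneg in auto)
  also have "\<dots> \<le> partial_rate k x (nonseed_profiles k)"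
    using rate_ge_split[OF k] .
  finally have "real (num_peers k x) * (?r0^2 / (6 * real k ^ 2))
      \<le> real (num_peers k x) * partial_rate k x (nonseed_profiles k)"
    by (rule mult_left_mono) simp
  then show ?thesis
    unfolding total_rate_eq sum_dS_plus by simp
qed

end
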